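(* There is a uniform constant $L>0$ such that for all $m,n\in\mathbb N$ the diagonal operator \[D(m,n):\mathbb C^{\mathcal M(m,n),s}\to\mathbb C^{\mathcal J(m,n)},\qquad (a_{\mathbf i})_{\mathbf i\in\mathcal M(m,n)}\mapsto\big(\operatorname{card}[\mathbf j]^{\frac{m+1}{2m}}a_{\mathbf j}\big)_{\mathbf j\in\mathcal J(m,n)}\] satisfies \[\big\|D(m,n):\ell^s_{\frac{2m}{m+1},1}(\mathcal M(m,n))\to\ell_{\frac{2m}{m+1},1}(\mathcal J(m,n))\big\|\le L\,m.\]
   Context: $\mathcal M(m,n)=\{(i_1,\dots,i_m):1\le i_k\le n\}$, $\mathcal J(m,n)=\{\mathbf j\in\mathcal M(m,n):j_1\le\dots\le j_m\}$. For $\mathbf i\in\mathcal M(m,n)$, $[\mathbf i]$ is the set of all $\mathbf j$ obtained from $\mathbf i$ by permuting its coordinates. $\mathbb C^{\mathcal M(m,n),s}$ is the space of symmetric matrices, i.e. $a_{\mathbf i}=a_{\mathbf j}$ whenever $\mathbf j\in[\mathbf i]$. For finite $I$ and $1<p<\infty$, $\|x\|_{\ell_{p,1}(I)}=\sum_kx_k^*(k^{1/p}-(k-1)^{1/p})$, $x^*$ the non-increasing rearrangement of $(|x_i|)$; $\ell^s_{p,1}(\mathcal M(m,n))$ denotes $\mathbb C^{\mathcal M(m,n),s}$ with the norm of $\ell_{p,1}(\mathcal M(m,n))$. *)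

theory Defs
  imports "HOL-Analysis.Analysis" "HOL-Library.Multiset"
begin

definition MI :: "nat \<Rightarrow> nat \<Rightarrow> nat list set" where
  "MI m n = {xs. length xs = m \<and> set xs \<subseteq> {1..n}}"

definition JI :: "nat \<Rightarrow> nat \<Rightarrow> nat list set" where
  "JI m n = {xs \<in> MI m n. sorted xs}"

definition perm_class :: "nat \<Rightarrow> nat \<Rightarrow> nat list \<Rightarrow> nat list set" where
  "perm_class m n i = {j \<in> MI m n. mset j = mset i}"

definition symmetric_mat :: "nat \<Rightarrow> nat \<Rightarrow> (nat list \<Rightarrow> complex) \<Rightarrow> bool" where
  "symmetric_mat m n a \<longleftrightarrow> (\<forall>i\<in>MI m n. \<forall>j\<in>perm_class m n i. a j = a i)"

definition decr_rearr :: "'a set \<Rightarrow> ('a \<Rightarrow> complex) \<Rightarrow> real list" where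
  "decr_rearr I x = rev (sorted_list_of_multiset (image_mset (\<lambda>i. cmod (x i)) (mset_set I)))"

text \<open>Lorentz norm ||x||_{p,1} = sum_k x*_k (k^{1/p} - (k-1)^{1/p}), k = 1..card I.\<close>
definition lorentz_norm :: "real \<Rightarrow> 'a set \<Rightarrow> ('a \<Rightarrow> complex) \<Rightarrow> real" where
  "lorentz_norm p I x =
     (\<Sum>k<card I. decr_rearr I x ! k * (real (Suc k) powr (1 / p) - real k powr (1 / p)))"

end

theory Submission
  imports Defs "HOL-Library.Discrete_Functions"
begin

text \<open>
  Both Lorentz norms are layer-cake integrals: \<open>\<parallel>x\<parallel>\<^sub>p\<^sub>,\<^sub>1\<close> is the integral over \<open>t \<ge> 0\<close>
  of \<open>N(t)\<^sup>1\<^sup>/\<^sup>p\<close>, where \<open>N(t)\<close> counts the indices with \<open>|x\<^sub>i| > t\<close>.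
  Split the sorted indices \<open>j\<close> into the dyadic classes \<open>2\<^sup>r \<le> card [j] < 2\<^sup>r\<^sup>+\<^sup>1\<close>, \<open>r \<le> m\<^sup>2\<close>.
  On one class the weight \<open>card [j]\<^sup>1\<^sup>/\<^sup>p\<close> is constant up to a factor \<open>2\<^sup>1\<^sup>/\<^sup>p\<close>, so after
  rescaling \<open>t\<close> its contribution is at most \<open>2\<^sup>1\<^sup>/\<^sup>p\<close> times the integral of the
  \<open>1/p\<close>-th power of the weighted count \<open>\<Sum> card [j]\<close> over the \<open>j\<close> of the class with \<open>|a\<^sub>j| > s\<close>.
  Concavity of \<open>s \<mapsto> s\<^sup>1\<^sup>/\<^sup>p\<close> merges the \<open>m\<^sup>2 + 1\<close> classes at the cost of a factor
  \<open>(m\<^sup>2 + 1)\<^sup>1\<^sup>-\<^sup>1\<^sup>/\<^sup>p \<le> 2m\<close>. Finally, as \<open>a\<close> is symmetric, the merged weighted count is the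
  number of all multi-indices \<open>i\<close> with \<open>|a\<^sub>i| > s\<close>, so its integral is \<open>\<parallel>a\<parallel>\<^sub>p\<^sub>,\<^sub>1\<close>.
\<close>

section \<open>Concavity of powers\<close>

lemma powr_add_le_add_powr:
  fixes a b \<alpha> :: real
  assumes "0 \<le> a" "0 \<le> b" "0 < \<alpha>" "\<alpha> \<le> 1"
  shows "(a + b) powr \<alpha> \<le> a powr \<alpha> + b powr \<alpha>"
proof (cases "a = 0 \<or> b = 0")
  case True
  then show ?thesis using assms by auto
next
  case False
  then have a: "a > 0" and b: "b > 0" using assms by auto
  have "a * (a + b) powr (\<alpha> - 1) \<le> a * a powr (\<alpha> - 1)"
    using a b assms by (intro mult_left_mono powr_mono2') auto
  then have 1: "a * (a + b) powr (\<alpha> - 1) \<le> a powr \<alpha>"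
    using a by (simp add: powr_mult_base)
  have "b * (a + b) powr (\<alpha> - 1) \<le> b * b powr (\<alpha> - 1)"
    using a b assms by (intro mult_left_mono powr_mono2') auto
  then have 2: "b * (a + b) powr (\<alpha> - 1) \<le> b powr \<alpha>"
    using b by (simp add: powr_mult_base)
  have "(a + b) powr \<alpha> = (a + b) * (a + b) powr (\<alpha> - 1)"
    using a b by (simp add: powr_mult_base)
  also have "\<dots> = a * (a + b) powr (\<alpha> - 1) + b * (a + b) powr (\<alpha> - 1)"
    by (simp add: algebra_simps)
  finally show ?thesis using 1 2 by linarith
qed

lemma powr_sum_le_sum_powr:
  fixes f :: "'a \<Rightarrow> real"
  assumes "finite S" "\<And>x. x \<in> S \<Longrightarrow> 0 \<le> f x" "0 < \<alpha>" "\<alpha> \<le> 1"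
  shows "(\<Sum>x\<in>S. f x) powr \<alpha> \<le> (\<Sum>x\<in>S. f x powr \<alpha>)"
  using assms
proof (induction S rule: finite_induct)
  case (insert x F)
  have "(\<Sum>x\<in>insert x F. f x) powr \<alpha> \<le> f x powr \<alpha> + (\<Sum>x\<in>F. f x) powr \<alpha>"
    using insert by (simp add: powr_add_le_add_powr sum_nonneg)
  also have "\<dots> \<le> f x powr \<alpha> + (\<Sum>x\<in>F. f x powr \<alpha>)"
    using insert by simp
  finally show ?case using insert by simp
qed simp

lemma sum_powr_le_card_powr_mult_powr_sum:
  fixes f :: "'a \<Rightarrow> real"
  assumes "finite S" "\<And>x. x \<in> S \<Longrightarrow> 0 \<le> f x" "0 < \<alpha>" "\<alpha> \<le> 1"
  shows "(\<Sum>x\<in>S. f x powr \<alpha>) \<le> real (card S) powr (1 - \<alpha>) * (\<Sum>x\<in>S. f x) powr \<alpha>"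
proof (cases "(\<Sum>x\<in>S. f x) = 0")
  case True
  then have "\<forall>x\<in>S. f x = 0" using assms sum_nonneg_eq_0_iff by blast
  then show ?thesis by simp
next
  case False
  define A where "A = (\<Sum>x\<in>S. f x)"
  define R where "R = real (card S)"
  have A: "A > 0" using False assms unfolding A_def by (metis less_eq_real_def sum_nonneg)
  have R: "R > 0" using False assms unfolding R_def by (metis card_gt_0_iff of_nat_0_less_iff sum.empty)
  \<comment> \<open>Young's inequality against the mean \<open>A / R\<close>\<close>
  have young: "f x powr \<alpha> * (A / R) powr (1 - \<alpha>) \<le> \<alpha> * f x + (1 - \<alpha>) * (A / R)" if "x \<in> S" for x
  proof (cases "f x = 0")
    case True
    then show ?thesis using assms A R by auto
  next
    case False
    then have "f x > 0" using assms(2)[OF that] by linarith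
    then show ?thesis using Youngs_inequality_0[of \<alpha> "1 - \<alpha>" "f x" "A / R"] assms A R by auto
  qed
  have "(\<Sum>x\<in>S. f x powr \<alpha>) * (A / R) powr (1 - \<alpha>) \<le> (\<Sum>x\<in>S. \<alpha> * f x + (1 - \<alpha>) * (A / R))"
    unfolding sum_distrib_right by (intro sum_mono young)
  also have "\<dots> = \<alpha> * A + R * ((1 - \<alpha>) * (A / R))"
    unfolding A_def R_def by (simp add: sum.distrib sum_distrib_left)
  also have "\<dots> = \<alpha> * A + (1 - \<alpha>) * A"
    using R by simp
  also have "\<dots> = A"
    by (simp add: algebra_simps)
  finally have "(\<Sum>x\<in>S. f x powr \<alpha>) \<le> A / (A / R) powr (1 - \<alpha>)"
    using A R by (simp add: pos_le_divide_eq)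
  also have "\<dots> = R powr (1 - \<alpha>) * A powr \<alpha>"
    using A R by (simp add: powr_divide powr_diff divide_simps)
  finally show ?thesis unfolding A_def R_def .
qed

definition halfline_integral :: "(real \<Rightarrow> real) \<Rightarrow> ennreal" where
  "halfline_integral h = (\<integral>\<^sup>+t. ennreal (h t) * indicator {0..} t \<partial>lborel)"

lemma halfline_integral_mono:
  assumes "\<And>t. t \<ge> 0 \<Longrightarrow> h t \<le> h' t"
  shows "halfline_integral h \<le> halfline_integral h'"
  unfolding halfline_integral_def
  by (intro nn_integral_mono) (auto simp: indicator_def assms ennreal_leI)

lemma halfline_integral_sum:
  assumes "\<And>i. i \<in> S \<Longrightarrow> h i \<in> borel_measurable borel" "\<And>i t. i \<in> S \<Longrightarrow> 0 \<le> h i t"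
  shows "halfline_integral (\<lambda>t. \<Sum>i\<in>S. h i t) = (\<Sum>i\<in>S. halfline_integral (h i))"
proof -
  have "halfline_integral (\<lambda>t. \<Sum>i\<in>S. h i t)
      = (\<integral>\<^sup>+t. (\<Sum>i\<in>S. ennreal (h i t) * indicator {0..} t) \<partial>lborel)"
    unfolding halfline_integral_def using assms(2)
    by (intro nn_integral_cong) (simp add: sum_distrib_right[symmetric] sum_ennreal)
  also have "\<dots> = (\<Sum>i\<in>S. halfline_integral (h i))"
    unfolding halfline_integral_def using assms(1) by (subst nn_integral_sum) auto
  finally show ?thesis .
qed

lemma halfline_integral_cmult:
  assumes "h \<in> borel_measurable borel" "c \<ge> 0"
  shows "halfline_integral (\<lambda>t. c * h t) = ennreal c * halfline_integral h"
proof -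
  have "halfline_integral (\<lambda>t. c * h t)
      = (\<integral>\<^sup>+t. ennreal c * (ennreal (h t) * indicator {0..} t) \<partial>lborel)"
    unfolding halfline_integral_def using assms(2)
    by (intro nn_integral_cong) (simp add: ennreal_mult' mult.assoc)
  also have "\<dots> = ennreal c * halfline_integral h"
    unfolding halfline_integral_def using assms(1) by (subst nn_integral_cmult) auto
  finally show ?thesis .
qed

lemma halfline_integral_rescale:
  assumes [measurable]: "h \<in> borel_measurable borel" and d: "d > 0"
  shows "halfline_integral (\<lambda>t. h (t / d)) = ennreal d * halfline_integral h"
proof -
  have "halfline_integral (\<lambda>t. h (t / d))
      = ennreal \<bar>d\<bar> * (\<integral>\<^sup>+u. ennreal (h ((0 + d * u) / d)) * indicator {0..} (0 + d * u) \<partial>lborel)"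
    unfolding halfline_integral_def using d by (intro nn_integral_real_affine) auto
  also have "(\<integral>\<^sup>+u. ennreal (h ((0 + d * u) / d)) * indicator {0..} (0 + d * u) \<partial>lborel)
      = halfline_integral h"
    unfolding halfline_integral_def using d
    by (intro nn_integral_cong) (simp add: indicator_def zero_le_mult_iff)
  finally show ?thesis using d by simp
qed

lemma borel_measurable_superlevel_sum:
  fixes v w :: "'a \<Rightarrow> real"
  assumes "finite A"
  shows "(\<lambda>t. \<Sum>j\<in>{j\<in>A. v j > t}. w j) \<in> borel_measurable borel"
proof -
  have "(\<Sum>j\<in>{j\<in>A. v j > t}. w j) = (\<Sum>j\<in>A. w j * indicator {..<v j} t)" for t
  proof -
    have "(\<Sum>j\<in>{j\<in>A. v j > t}. w j) = (\<Sum>j\<in>A. if v j > t then w j else 0)"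
      using assms by (rule sum.inter_filter)
    then show ?thesis by (auto simp: indicator_def intro!: sum.cong)
  qed
  then have "(\<lambda>t. \<Sum>j\<in>{j\<in>A. v j > t}. w j) = (\<lambda>t. \<Sum>j\<in>A. w j * indicator {..<v j} t)"
    by simp
  also have "\<dots> \<in> borel_measurable borel" by measurable
  finally show ?thesis .
qed

lemma borel_measurable_superlevel_card:
  fixes v :: "'a \<Rightarrow> real"
  assumes "finite A"
  shows "(\<lambda>t. real (card {j\<in>A. v j > t})) \<in> borel_measurable borel"
proof -
  have "(\<lambda>t. \<Sum>j\<in>{j\<in>A. v j > t}. 1 :: real) = (\<lambda>t. real (card {j\<in>A. v j > t}))"
    by simp
  then show ?thesis using borel_measurable_superlevel_sum[OF assms, where v = v and w = "\<lambda>_. 1"] by metis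
qed

section \<open>The layer-cake formula for the Lorentz norm\<close>

lemma length_decr_rearr: "finite I \<Longrightarrow> length (decr_rearr I x) = card I"
  unfolding decr_rearr_def
  by (metis length_rev mset_sorted_list_of_multiset size_image_mset size_mset size_mset_set)

lemma decr_rearr_nonneg: "v \<in> set (decr_rearr I x) \<Longrightarrow> 0 \<le> v"
  unfolding decr_rearr_def by auto

lemma decr_rearr_antimono:
  assumes "k' \<le> k" "k < length (decr_rearr I x)"
  shows "decr_rearr I x ! k \<le> decr_rearr I x ! k'"
proof -
  define S where "S = sorted_list_of_multiset (image_mset (\<lambda>i. cmod (x i)) (mset_set I))"
  have "decr_rearr I x = rev S" unfolding S_def decr_rearr_def ..
  moreover have "S ! (length S - Suc k) \<le> S ! (length S - Suc k')"
    using assms \<open>decr_rearr I x = rev S\<close> by (intro sorted_nth_mono) (auto simp: S_def)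
  ultimately show ?thesis using assms by (simp add: rev_nth)
qed

lemma card_superlevel_decr_rearr:
  assumes "finite I"
  shows "card {i\<in>I. cmod (x i) > t} = card {k. k < card I \<and> decr_rearr I x ! k > t}"
proof -
  let ?L = "decr_rearr I x"
  have "card {i\<in>I. cmod (x i) > t} = size (filter_mset (\<lambda>v. v > t) (image_mset (\<lambda>i. cmod (x i)) (mset_set I)))"
    using assms by (simp add: filter_mset_image_mset)
  also have "\<dots> = size (filter_mset (\<lambda>v. v > t) (mset ?L))"
    unfolding decr_rearr_def by simp
  also have "\<dots> = length (filter (\<lambda>v. v > t) ?L)"
    by (metis mset_filter size_mset)
  also have "\<dots> = card {k. k < card I \<and> ?L ! k > t}"
    using assms by (simp add: length_filter_conv_card length_decr_rearr)
  finally show ?thesis .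
qed

lemma downward_closed_eq_lessThan_card:
  fixes S :: "nat set"
  assumes "finite S" "\<And>k k'. k \<in> S \<Longrightarrow> k' \<le> k \<Longrightarrow> k' \<in> S"
  shows "S = {..<card S}"
proof (cases "S = {}")
  case False
  define M where "M = Max S"
  have "S = {..M}"
  proof
    show "S \<subseteq> {..M}" using assms(1) unfolding M_def by auto
    show "{..M} \<subseteq> S" using assms(2) Max_in[OF assms(1) False] unfolding M_def by auto
  qed
  then show ?thesis by (simp add: lessThan_Suc_atMost)
qed simp

lemma superlevel_decr_rearr_eq_lessThan:
  assumes "finite I"
  shows "{k. k < card I \<and> decr_rearr I x ! k > t} = {..<card {i\<in>I. cmod (x i) > t}}"
  unfolding card_superlevel_decr_rearr[OF assms]
proof (rule downward_closed_eq_lessThan_card)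
  fix k k' assume "k \<in> {k. k < card I \<and> decr_rearr I x ! k > t}" "k' \<le> k"
  then show "k' \<in> {k. k < card I \<and> decr_rearr I x ! k > t}"
    using decr_rearr_antimono[of k' k I x] length_decr_rearr[OF assms] by auto
qed simp

lemma lorentz_norm_nonneg:
  assumes "finite I" "p > 0"
  shows "0 \<le> lorentz_norm p I x"
  unfolding lorentz_norm_def
proof (intro sum_nonneg mult_nonneg_nonneg)
  fix k assume "k \<in> {..<card I}"
  then show "0 \<le> decr_rearr I x ! k"
    using assms by (metis decr_rearr_nonneg nth_mem length_decr_rearr lessThan_iff)
  show "0 \<le> real (Suc k) powr (1 / p) - real k powr (1 / p)"
    using assms by (simp add: powr_mono2)
qed

lemma lorentz_norm_layer_cake:
  assumes I: "finite I" and p: "p > 0"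
  shows "ennreal (lorentz_norm p I x)
    = halfline_integral (\<lambda>t. real (card {i\<in>I. cmod (x i) > t}) powr (1 / p))"
proof -
  define L where "L = decr_rearr I x"
  define w where "w k = real (Suc k) powr (1 / p) - real k powr (1 / p)" for k
  have w: "0 \<le> w k" for k unfolding w_def using p by (simp add: powr_mono2)
  have L: "0 \<le> L ! k" if "k < card I" for k
    using that I unfolding L_def by (metis decr_rearr_nonneg nth_mem length_decr_rearr)
  \<comment> \<open>the sum over \<open>k\<close> telescopes to \<open>card {i. |x\<^sub>i| > t}\<^sup>1\<^sup>/\<^sup>p\<close>\<close>
  have pointwise: "real (card {i\<in>I. cmod (x i) > t}) powr (1 / p)
      = (\<Sum>k<card I. w k * indicator {..<L ! k} t)" for t
  proof -
    have "(\<Sum>k<card I. w k * indicator {..<L ! k} t) = (\<Sum>k<card I. if L ! k > t then w k else 0)"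
      by (intro sum.cong) (auto simp: indicator_def)
    also have "\<dots> = (\<Sum>k\<in>{k\<in>{..<card I}. L ! k > t}. w k)"
      by (rule sum.inter_filter[symmetric]) simp
    also have "{k\<in>{..<card I}. L ! k > t} = {k. k < card I \<and> L ! k > t}"
      by auto
    also have "\<dots> = {..<card {i\<in>I. cmod (x i) > t}}"
      unfolding L_def by (rule superlevel_decr_rearr_eq_lessThan[OF I])
    also have "(\<Sum>k<card {i\<in>I. cmod (x i) > t}. w k) = real (card {i\<in>I. cmod (x i) > t}) powr (1 / p)"
      unfolding w_def by (subst sum_lessThan_telescope) simp
    finally show ?thesis by simp
  qed
  have "halfline_integral (\<lambda>t. real (card {i\<in>I. cmod (x i) > t}) powr (1 / p))
      = (\<integral>\<^sup>+t. (\<Sum>k<card I. ennreal (w k) * indicator {0..<L ! k} t) \<partial>lborel)"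
    unfolding halfline_integral_def pointwise using w
    by (intro nn_integral_cong) (auto simp: indicator_def ennreal_mult' sum_nonneg intro!: sum.cong)
  also have "\<dots> = (\<Sum>k<card I. ennreal (w k) * emeasure lborel {0..<L ! k})"
    by (subst nn_integral_sum) (auto simp: nn_integral_cmult_indicator)
  also have "\<dots> = (\<Sum>k<card I. ennreal (L ! k * w k))"
    using L w by (intro sum.cong) (auto simp: ennreal_mult' mult.commute)
  also have "\<dots> = ennreal (\<Sum>k<card I. L ! k * w k)"
    using L w by (intro sum_ennreal) auto
  also have "(\<Sum>k<card I. L ! k * w k) = lorentz_norm p I x"
    unfolding lorentz_norm_def L_def w_def ..
  finally show ?thesis by simp
qed

section \<open>Dyadic decomposition of the weights\<close>

lemma halfline_integral_dyadic_block:
  fixes c x :: "'a \<Rightarrow> real"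
  assumes J: "finite J" and \<alpha>: "0 < \<alpha>" and b: "0 < b"
    and c: "\<And>j. j \<in> J \<Longrightarrow> b \<le> c j \<and> c j \<le> 2 * b" and x: "\<And>j. 0 \<le> x j"
  shows "halfline_integral (\<lambda>t. real (card {j\<in>J. c j powr \<alpha> * x j > t}) powr \<alpha>)
    \<le> ennreal (2 powr \<alpha>) * halfline_integral (\<lambda>s. (\<Sum>j\<in>{j\<in>J. x j > s}. c j) powr \<alpha>)"
proof -
  define d where "d = (2 * b) powr \<alpha>"
  define T where "T s = (\<Sum>j\<in>{j\<in>J. x j > s}. c j)" for s
  have d: "0 < d" unfolding d_def using b by simp
  have T_nonneg: "0 \<le> T s" for s
    unfolding T_def using b c by (intro sum_nonneg) (auto intro: order_trans[of 0 b])
  have [measurable]: "T \<in> borel_measurable borel"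
    unfolding T_def using J by (rule borel_measurable_superlevel_sum)
  have count_le: "real (card {j\<in>J. c j powr \<alpha> * x j > t}) \<le> T (t / d) / b" for t
  proof -
    have "{j\<in>J. c j powr \<alpha> * x j > t} \<subseteq> {j\<in>J. x j > t / d}"
    proof safe
      fix j assume j: "j \<in> J" "c j powr \<alpha> * x j > t"
      have "c j powr \<alpha> \<le> d"
        unfolding d_def using b c[OF j(1)] \<alpha> by (intro powr_mono2) auto
      then have "c j powr \<alpha> * x j \<le> d * x j" using x by (rule mult_right_mono)
      then show "x j > t / d" using j d by (simp add: divide_less_eq mult.commute)
    qed
    then have "real (card {j\<in>J. c j powr \<alpha> * x j > t}) \<le> (\<Sum>j\<in>{j\<in>J. x j > t / d}. b) / b"
      using J b by (simp add: card_mono)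
    also have "\<dots> \<le> T (t / d) / b"
      unfolding T_def using b c by (intro divide_right_mono sum_mono) auto
    finally show ?thesis .
  qed
  have "halfline_integral (\<lambda>t. real (card {j\<in>J. c j powr \<alpha> * x j > t}) powr \<alpha>)
      \<le> halfline_integral (\<lambda>t. b powr - \<alpha> * T (t / d) powr \<alpha>)"
  proof (rule halfline_integral_mono)
    fix t :: real
    have "real (card {j\<in>J. c j powr \<alpha> * x j > t}) powr \<alpha> \<le> (T (t / d) / b) powr \<alpha>"
      using count_le \<alpha> by (intro powr_mono2) auto
    also have "\<dots> = T (t / d) powr \<alpha> / b powr \<alpha>"
      using b T_nonneg by (simp add: powr_divide)
    also have "\<dots> = b powr - \<alpha> * T (t / d) powr \<alpha>"
      by (simp add: powr_minus divide_inverse mult.commute)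
    finally show "real (card {j\<in>J. c j powr \<alpha> * x j > t}) powr \<alpha> \<le> b powr - \<alpha> * T (t / d) powr \<alpha>" .
  qed
  also have "\<dots> = ennreal d * halfline_integral (\<lambda>s. b powr - \<alpha> * T s powr \<alpha>)"
    using halfline_integral_rescale[of "\<lambda>s. b powr - \<alpha> * T s powr \<alpha>" d] d by simp
  also have "\<dots> = ennreal d * (ennreal (b powr - \<alpha>) * halfline_integral (\<lambda>s. T s powr \<alpha>))"
    using halfline_integral_cmult[of "\<lambda>s. T s powr \<alpha>" "b powr - \<alpha>"] by simp
  also have "\<dots> = ennreal (d * b powr - \<alpha>) * halfline_integral (\<lambda>s. T s powr \<alpha>)"
    using d by (simp add: ennreal_mult mult.assoc)
  also have "d * b powr - \<alpha> = 2 powr \<alpha>"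
    unfolding d_def using b by (simp add: powr_mult powr_minus)
  finally show ?thesis unfolding T_def .
qed

lemma halfline_integral_dyadic_decomposition:
  fixes c :: "'a \<Rightarrow> nat" and x :: "'a \<Rightarrow> real"
  assumes J: "finite J" and \<alpha>: "0 < \<alpha>" "\<alpha> \<le> 1"
    and c: "\<And>j. j \<in> J \<Longrightarrow> 0 < c j \<and> c j < 2 ^ R" and x: "\<And>j. 0 \<le> x j"
  shows "halfline_integral (\<lambda>t. real (card {j\<in>J. real (c j) powr \<alpha> * x j > t}) powr \<alpha>)
    \<le> ennreal (2 powr \<alpha> * real R powr (1 - \<alpha>))
       * halfline_integral (\<lambda>s. real (\<Sum>j\<in>{j\<in>J. x j > s}. c j) powr \<alpha>)"
proof -
  define y where "y j = real (c j) powr \<alpha> * x j" for j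
  define J' where "J' r = {j\<in>J. floor_log (c j) = r}" for r
  define T where "T r s = (\<Sum>j\<in>{j\<in>J' r. x j > s}. real (c j))" for r s
  have J': "finite (J' r)" for r unfolding J'_def using J by simp
  have class_lt: "floor_log (c j) < R" if "j \<in> J" for j
  proof -
    have "2 ^ floor_log (c j) < (2::nat) ^ R"
      using c[OF that] floor_log_exp2_le[of "c j"] by linarith
    then show ?thesis by simp
  qed
  have regroup: "(\<Sum>r<R. \<Sum>j\<in>{j\<in>J' r. P j}. w j) = (\<Sum>j\<in>{j\<in>J. P j}. w j)"
    for P and w :: "'a \<Rightarrow> real"
  proof -
    have "(\<Sum>r<R. \<Sum>j\<in>{j\<in>J' r. P j}. w j)
        = (\<Sum>r\<in>{..<R}. \<Sum>j\<in>{j. j \<in> {j\<in>J. P j} \<and> floor_log (c j) = r}. w j)"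
      unfolding J'_def by (intro sum.cong) (auto intro: sum.cong)
    also have "\<dots> = (\<Sum>j\<in>{j\<in>J. P j}. w j)"
      using J class_lt by (intro sum.group) auto
    finally show ?thesis .
  qed
  have T_nonneg: "0 \<le> T r s" for r s unfolding T_def by (simp add: sum_nonneg)
  have [measurable]: "T r \<in> borel_measurable borel" for r
    unfolding T_def using J' by (rule borel_measurable_superlevel_sum)
  have card_powr_measurable: "(\<lambda>t. real (card {j\<in>J' r. y j > t}) powr \<alpha>) \<in> borel_measurable borel" for r
    using borel_measurable_superlevel_card[OF J'] by (rule powr_real_measurable) simp
  have sum_powr_measurable:
    "(\<lambda>s. (\<Sum>j\<in>{j\<in>J. x j > s}. real (c j)) powr \<alpha>) \<in> borel_measurable borel"
    using borel_measurable_superlevel_sum[OF J, where v = x and w = "\<lambda>j. real (c j)"]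
    by (rule powr_real_measurable) simp
  have [measurable]: "(\<lambda>s. T r s powr \<alpha>) \<in> borel_measurable borel" for r
    by measurable
  have sum_T: "(\<Sum>r<R. T r s) = real (\<Sum>j\<in>{j\<in>J. x j > s}. c j)" for s
    unfolding T_def regroup by simp
  have "halfline_integral (\<lambda>t. real (card {j\<in>J. y j > t}) powr \<alpha>)
      \<le> halfline_integral (\<lambda>t. \<Sum>r<R. real (card {j\<in>J' r. y j > t}) powr \<alpha>)"
  proof (rule halfline_integral_mono)
    fix t :: real
    have "real (card {j\<in>J. y j > t}) = (\<Sum>r<R. real (card {j\<in>J' r. y j > t}))"
      using regroup[where P = "\<lambda>j. y j > t" and w = "\<lambda>_. 1"] by simp
    then show "real (card {j\<in>J. y j > t}) powr \<alpha> \<le> (\<Sum>r<R. real (card {j\<in>J' r. y j > t}) powr \<alpha>)"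
      using \<alpha> powr_sum_le_sum_powr[of "{..<R}" "\<lambda>r. real (card {j\<in>J' r. y j > t})" \<alpha>] by simp
  qed
  also have "\<dots> = (\<Sum>r<R. halfline_integral (\<lambda>t. real (card {j\<in>J' r. y j > t}) powr \<alpha>))"
    by (rule halfline_integral_sum) (simp_all add: card_powr_measurable)
  also have "\<dots> \<le> (\<Sum>r<R. ennreal (2 powr \<alpha>) * halfline_integral (\<lambda>s. T r s powr \<alpha>))"
  proof (intro sum_mono)
    fix r
    have "2 ^ r \<le> real (c j) \<and> real (c j) \<le> 2 * 2 ^ r" if "j \<in> J' r" for j
    proof -
      have "2 ^ r \<le> c j" "c j \<le> 2 * 2 ^ r"
        using that c floor_log_exp2_le[of "c j"] floor_log_exp2_gt[of "c j"] unfolding J'_def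
        by auto
      then have "real (2 ^ r) \<le> real (c j)" "real (c j) \<le> real (2 * 2 ^ r)"
        by (simp_all only: of_nat_le_iff)
      then show ?thesis by simp
    qed
    then show "halfline_integral (\<lambda>t. real (card {j\<in>J' r. y j > t}) powr \<alpha>)
        \<le> ennreal (2 powr \<alpha>) * halfline_integral (\<lambda>s. T r s powr \<alpha>)"
      unfolding y_def T_def
      by (intro halfline_integral_dyadic_block[OF J' \<alpha>(1), where b = "2 ^ r"]) (simp_all add: x)
  qed
  also have "\<dots> = ennreal (2 powr \<alpha>) * halfline_integral (\<lambda>s. \<Sum>r<R. T r s powr \<alpha>)"
    using halfline_integral_sum[of "{..<R}" "\<lambda>r s. T r s powr \<alpha>"] T_nonneg
    by (simp add: sum_distrib_left)
  also have "\<dots> \<le> ennreal (2 powr \<alpha>) * halfline_integral (\<lambda>s. real R powr (1 - \<alpha>) * real (\<Sum>j\<in>{j\<in>J. x j > s}. c j) powr \<alpha>)"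
  proof (intro mult_left_mono halfline_integral_mono)
    fix s :: real
    show "(\<Sum>r<R. T r s powr \<alpha>) \<le> real R powr (1 - \<alpha>) * real (\<Sum>j\<in>{j\<in>J. x j > s}. c j) powr \<alpha>"
      using sum_powr_le_card_powr_mult_powr_sum[of "{..<R}" "\<lambda>r. T r s" \<alpha>] \<alpha> T_nonneg
      by (simp add: sum_T)
  qed simp
  also have "halfline_integral (\<lambda>s. real R powr (1 - \<alpha>) * real (\<Sum>j\<in>{j\<in>J. x j > s}. c j) powr \<alpha>)
      = ennreal (real R powr (1 - \<alpha>)) * halfline_integral (\<lambda>s. real (\<Sum>j\<in>{j\<in>J. x j > s}. c j) powr \<alpha>)"
    by (rule halfline_integral_cmult) (simp_all add: sum_powr_measurable)
  finally show ?thesis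
    unfolding y_def by (simp add: ennreal_mult mult.assoc)
qed

lemma finite_MI: "finite (MI m n)"
proof -
  have "MI m n \<subseteq> {xs. set xs \<subseteq> {1..n} \<and> length xs = m}" unfolding MI_def by auto
  then show ?thesis by (rule finite_subset) (simp add: finite_lists_length_eq)
qed

lemma JI_subset_MI: "JI m n \<subseteq> MI m n"
  unfolding JI_def by auto

lemma finite_JI: "finite (JI m n)"
  using finite_subset[OF JI_subset_MI finite_MI] .

lemma sort_in_JI: "i \<in> MI m n \<Longrightarrow> sort i \<in> JI m n"
  unfolding JI_def MI_def by auto

lemma perm_class_eq_sort_fiber:
  assumes "j \<in> JI m n"
  shows "perm_class m n j = {i \<in> MI m n. sort i = j}"
proof -
  have "sort i = j \<longleftrightarrow> mset i = mset j" for i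
  proof
    assume "mset i = mset j"
    then show "sort i = j" using assms properties_for_sort[of j i] unfolding JI_def by auto
  qed auto
  then show ?thesis unfolding perm_class_def by auto
qed

lemma card_perm_class_pos:
  assumes "j \<in> MI m n"
  shows "0 < card (perm_class m n j)"
proof -
  have "finite (perm_class m n j)" unfolding perm_class_def using finite_MI by simp
  moreover have "j \<in> perm_class m n j" using assms unfolding perm_class_def by simp
  ultimately show ?thesis by (auto simp: card_gt_0_iff)
qed

lemma card_perm_class_le: "j \<in> MI m n \<Longrightarrow> card (perm_class m n j) \<le> 2 ^ (m * m)"
proof -
  assume j: "j \<in> MI m n"
  have "perm_class m n j \<subseteq> {xs. set xs \<subseteq> set j \<and> length xs = m}"
    unfolding perm_class_def MI_def using mset_eq_setD by fastforce
  then have "card (perm_class m n j) \<le> card {xs. set xs \<subseteq> set j \<and> length xs = m}"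
    by (intro card_mono) (auto simp: finite_lists_length_eq)
  also have "\<dots> = card (set j) ^ m" by (simp add: card_lists_length_eq)
  also have "\<dots> \<le> m ^ m" using j card_length[of j] unfolding MI_def by (intro power_mono) auto
  also have "\<dots> \<le> (2 ^ m) ^ m" by (intro power_mono) (auto intro: less_imp_le less_exp)
  also have "\<dots> = 2 ^ (m * m)" by (simp add: power_mult)
  finally show ?thesis .
qed

lemma symmetric_mat_sort:
  assumes "symmetric_mat m n a" "i \<in> MI m n"
  shows "a (sort i) = a i"
proof -
  have "sort i \<in> perm_class m n i"
    using sort_in_JI[OF assms(2)] JI_subset_MI unfolding perm_class_def by auto
  then show ?thesis using assms unfolding symmetric_mat_def by auto
qed

lemma card_MI_eq_sum_card_perm_class:
  assumes "\<And>i. i \<in> MI m n \<Longrightarrow> P (sort i) \<longleftrightarrow> P i"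
  shows "card {i\<in>MI m n. P i} = (\<Sum>j\<in>{j\<in>JI m n. P j}. card (perm_class m n j))"
proof -
  have fiber: "{i\<in>MI m n. P i \<and> sort i = j} = perm_class m n j"
    if j: "j \<in> JI m n" "P j" for j
  proof -
    have "P i" if "i \<in> MI m n" "sort i = j" for i
      using assms[OF that(1)] that(2) j(2) by simp
    then show ?thesis unfolding perm_class_eq_sort_fiber[OF j(1)] by auto
  qed
  have "card {i\<in>MI m n. P i} = (\<Sum>i\<in>{i\<in>MI m n. P i}. 1)"
    by simp
  also have "\<dots> = (\<Sum>j\<in>{j\<in>JI m n. P j}. \<Sum>i\<in>{i. i \<in> {i\<in>MI m n. P i} \<and> sort i = j}. 1)"
    using finite_MI finite_JI assms sort_in_JI by (intro sum.group[symmetric]) auto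
  also have "\<dots> = (\<Sum>j\<in>{j\<in>JI m n. P j}. card (perm_class m n j))"
    by (intro sum.cong) (simp_all add: fiber)
  finally show ?thesis .
qed

lemma diagonal_constant_le:
  fixes m :: nat
  assumes "m \<ge> 1"
  shows "2 powr ((real m + 1) / (2 * real m)) * real (m * m + 1) powr (1 - (real m + 1) / (2 * real m))
    \<le> 4 * real m"
proof -
  define \<alpha> where "\<alpha> = (real m + 1) / (2 * real m)"
  have m: "real m \<ge> 1" using assms by simp
  have "2 powr \<alpha> \<le> 2 powr 1"
    unfolding \<alpha>_def using m by (intro powr_mono) (auto simp: divide_simps)
  then have two: "2 powr \<alpha> \<le> 2" by simp
  have "real (m * m + 1) powr (1 - \<alpha>) \<le> real (m * m + 1) powr (1 / 2)"
    unfolding \<alpha>_def using m by (intro powr_mono) (auto simp: divide_simps)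
  also have "\<dots> = sqrt (real (m * m + 1))" by (simp add: powr_half_sqrt)
  also have "\<dots> \<le> sqrt ((2 * real m) ^ 2)"
  proof (intro real_sqrt_le_mono)
    have "1 \<le> real m * real m" using m mult_mono[of 1 "real m" 1 "real m"] by simp
    then show "real (m * m + 1) \<le> (2 * real m) ^ 2" by (simp add: power2_eq_square)
  qed
  also have "\<dots> = 2 * real m" by (rule real_sqrt_unique) (use m in auto)
  finally have "real (m * m + 1) powr (1 - \<alpha>) \<le> 2 * real m" .
  with two have "2 powr \<alpha> * real (m * m + 1) powr (1 - \<alpha>) \<le> 2 * (2 * real m)"
    by (intro mult_mono) auto
  then show ?thesis unfolding \<alpha>_def by simp
qed

lemma lorentz_norm_diagonal_le:
  fixes a :: "nat list \<Rightarrow> complex"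
  assumes m: "m \<ge> 1" and sym: "symmetric_mat m n a"
  shows "lorentz_norm (2 * real m / (real m + 1)) (JI m n)
           (\<lambda>j. complex_of_real (real (card (perm_class m n j)) powr ((real m + 1) / (2 * real m))) * a j)
         \<le> 4 * real m * lorentz_norm (2 * real m / (real m + 1)) (MI m n) a"
proof -
  define p where "p = 2 * real m / (real m + 1)"
  define \<alpha> where "\<alpha> = (real m + 1) / (2 * real m)"
  define c where "c j = card (perm_class m n j)" for j
  define x where "x j = cmod (a j)" for j
  define K where "K = 2 powr \<alpha> * real (m * m + 1) powr (1 - \<alpha>)"
  have p: "0 < p" and \<alpha>: "0 < \<alpha>" "\<alpha> \<le> 1" and p_\<alpha>: "1 / p = \<alpha>"
    using m by (auto simp: p_def \<alpha>_def divide_simps)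
  have c: "0 < c j \<and> c j < 2 ^ (m * m + 1)" if "j \<in> JI m n" for j
  proof -
    have "j \<in> MI m n" using that JI_subset_MI by blast
    then have "0 < c j" "c j \<le> 2 ^ (m * m)"
      unfolding c_def by (auto intro: card_perm_class_pos card_perm_class_le)
    then show ?thesis by simp
  qed
  have count: "real (\<Sum>j\<in>{j\<in>JI m n. x j > s}. c j) = real (card {i\<in>MI m n. x i > s})" for s
  proof -
    have "card {i\<in>MI m n. x i > s} = (\<Sum>j\<in>{j\<in>JI m n. x j > s}. c j)"
      unfolding c_def
      by (rule card_MI_eq_sum_card_perm_class) (simp add: x_def symmetric_mat_sort[OF sym])
    then show ?thesis by simp
  qed
  have "ennreal (lorentz_norm p (JI m n) (\<lambda>j. complex_of_real (real (c j) powr \<alpha>) * a j))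
      = halfline_integral (\<lambda>t. real (card {j\<in>JI m n. real (c j) powr \<alpha> * x j > t}) powr \<alpha>)"
    using lorentz_norm_layer_cake[OF finite_JI p] by (simp add: p_\<alpha> x_def norm_mult)
  also have "\<dots> \<le> ennreal K * halfline_integral (\<lambda>s. real (\<Sum>j\<in>{j\<in>JI m n. x j > s}. c j) powr \<alpha>)"
    unfolding K_def using c
    by (intro halfline_integral_dyadic_decomposition[OF finite_JI \<alpha>]) (auto simp: x_def)
  also have "\<dots> = ennreal K * halfline_integral (\<lambda>s. real (card {i\<in>MI m n. x i > s}) powr \<alpha>)"
    unfolding count ..
  also have "\<dots> = ennreal K * ennreal (lorentz_norm p (MI m n) a)"
    using lorentz_norm_layer_cake[OF finite_MI p] by (simp add: p_\<alpha> x_def)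
  also have "\<dots> = ennreal (K * lorentz_norm p (MI m n) a)"
    using lorentz_norm_nonneg[OF finite_MI p] by (simp add: K_def ennreal_mult)
  finally have "lorentz_norm p (JI m n) (\<lambda>j. complex_of_real (real (c j) powr \<alpha>) * a j)
      \<le> K * lorentz_norm p (MI m n) a"
    using lorentz_norm_nonneg[OF finite_MI p] by (simp add: K_def ennreal_le_iff)
  also have "\<dots> \<le> 4 * real m * lorentz_norm p (MI m n) a"
    using diagonal_constant_le[OF m] lorentz_norm_nonneg[OF finite_MI p]
    unfolding K_def \<alpha>_def by (rule mult_right_mono)
  finally show ?thesis unfolding p_def \<alpha>_def c_def .
qed

theorem lemma5p4:
  shows "\<exists>L::real. L > 0 \<and>
    (\<forall>m n::nat. m \<ge> 1 \<longrightarrow> n \<ge> 1 \<longrightarrow>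
      (\<forall>a :: nat list \<Rightarrow> complex. symmetric_mat m n a \<longrightarrow>
         lorentz_norm (2 * real m / (real m + 1)) (JI m n)
           (\<lambda>j. complex_of_real (real (card (perm_class m n j)) powr ((real m + 1) / (2 * real m))) * a j)
         \<le> L * real m * lorentz_norm (2 * real m / (real m + 1)) (MI m n) a))"
  by (rule exI[of _ 4]) (auto intro: lorentz_norm_diagonal_le)

end
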